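(* Let $S$ be a solid and let $x\in S^*$ with $x=a+e(x)$ for some $a\in S$ with $e(a)=0$. Then (1) $e(x)<|a|$; and (2) $e(x)a^{-1}=e(x)x^{-1}=e(u(x))$.
   Context: A solid is a set $S$ with two binary operations $+$ and $\cdot$ (written $xy$) and a binary relation $\le$ satisfying the following axioms (all variables range over $S$). (A1) $+$ is associative and commutative. (A2) For each $x$ there is $e$ with $x+e=x$ such that $e+f=e$ for every $f$ with $x+f=x$; this $e$ is unique and is denoted $e(x)$ (the magnitude of $x$). An element $x$ with $x=e(x)$ is called a magnitude. (A3) For each $x$ there is $s$ with $x+s=e(x)$ and $e(s)=e(x)$; it is unique and denoted $-x$; write $x-y$ for $x+(-y)$. (A4) $e(x+y)=e(x)$ or $e(x+y)=e(y)$. (M1) $\cdot$ is associative and commutative. (M2) For each $x\neq e(x)$ there is $u$ with $xu=x$ such that $uv=u$ for every $v$ with $xv=x$; it is unique and denoted $u(x)$. (M3) For each $x\ne e(x)$ there is $d$ with $xd=u(x)$ and $u(d)=u(x)$; it is unique and denoted $x^{-1}$; write $y/x$ for $yx^{-1}$. (M4) If $x\neq e(x)$ and $y\ne e(y)$ then $u(xy)=u(x)$ or $u(xy)=u(y)$. (O1) $\le$ is a total order (reflexive, antisymmetric, transitive, total); $x<y$ means $x\le y$ and $x\ne y$. (O2) $x\le y\Rightarrow x+z\le y+z$. (O3) $y+e(x)=e(x)\Rightarrow (y\le e(x)$ and $-y\le e(x))$. (O4) $(e(x)<x$ and $y\le z)\Rightarrow xy\le xz$. (O5) $e(y)\le y\le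 z\Rightarrow e(x)y\le e(x)z$. (AM1) For all $x,y$ there is $z$ with $e(x)y=e(z)$. (AM2) $e(xy)=e(x)y+e(y)x$. (AM3) If $x\ne e(x)$ then $e(u(x))=e(x)/x$. (AM4) (distributivity axiom) $xy+xz=x(y+z)+e(x)y+e(x)z$. (AM5) $-(xy)=(-x)y$. (E1) There is $m$ with $m+x=x$ for all $x$; it is unique, called zero and denoted $0$. (E2) There is $u$ with $ux=x$ for all $x$; it is unique, called one and denoted $1$. (E3) There is $M$ with $e(x)+M=M$ for all $x$. (E4) There is $x$ with $e(x)\ne 0$ and $e(x)\ne M$. (E5) For every $x$ there is $a$ with $x=a+e(x)$ and $e(a)=0$. (E6) If $x,y$ are magnitudes with $x<y$, there is $z$ with $z\ne e(z)$ and $x<z<y$. Further notation: $S^*=\{x\in S: x\ne e(x)\}$ (zeroless elements). $x$ is positive if $e(x)\le x$ and negative if $x<e(x)$; $|x|=x$ if $x$ is positive and $|x|=-x$ if $x$ is negative. $x$ is precise if $e(x)=0$. The relative uncertainty $R(x)$ is $e(u(x))$ if $x\ne e(x)$, and $M$ (from (E3)) if $x=e(x)$. *)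

theory Defs
  imports Main
begin

text \<open>A solid is modelled on a type 'a (the carrier S is the whole type), with
addition ad, multiplication mu and order relation le as parameters.\<close>

definition sol_e :: "('a \<Rightarrow> 'a \<Rightarrow> 'a) \<Rightarrow> 'a \<Rightarrow> 'a" where
  "sol_e ad x = (THE e. ad x e = x \<and> (\<forall>f. ad x f = x \<longrightarrow> ad e f = e))"

definition sol_neg :: "('a \<Rightarrow> 'a \<Rightarrow> 'a) \<Rightarrow> 'a \<Rightarrow> 'a" where
  "sol_neg ad x = (THE s. ad x s = sol_e ad x \<and> sol_e ad s = sol_e ad x)"

definition sol_u :: "('a \<Rightarrow> 'a \<Rightarrow> 'a) \<Rightarrow> 'a \<Rightarrow> 'a" where
  "sol_u mu x = (THE u. mu x u = x \<and> (\<forall>v. mu x v = x \<longrightarrow> mu u v = u))"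

definition sol_inv :: "('a \<Rightarrow> 'a \<Rightarrow> 'a) \<Rightarrow> 'a \<Rightarrow> 'a" where
  "sol_inv mu x = (THE d. mu x d = sol_u mu x \<and> sol_u mu d = sol_u mu x)"

definition sol_zero :: "('a \<Rightarrow> 'a \<Rightarrow> 'a) \<Rightarrow> 'a" where
  "sol_zero ad = (THE m. \<forall>x. ad m x = x)"

definition sol_one :: "('a \<Rightarrow> 'a \<Rightarrow> 'a) \<Rightarrow> 'a" where
  "sol_one mu = (THE u. \<forall>x. mu u x = x)"

definition sol_abs :: "('a \<Rightarrow> 'a \<Rightarrow> 'a) \<Rightarrow> ('a \<Rightarrow> 'a \<Rightarrow> bool) \<Rightarrow> 'a \<Rightarrow> 'a" where
  "sol_abs ad le x = (if le (sol_e ad x) x then x else sol_neg ad x)"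

definition solid :: "('a \<Rightarrow> 'a \<Rightarrow> 'a) \<Rightarrow> ('a \<Rightarrow> 'a \<Rightarrow> 'a) \<Rightarrow> ('a \<Rightarrow> 'a \<Rightarrow> bool) \<Rightarrow> bool" where
  "solid ad mu le \<longleftrightarrow>
    \<comment> \<open>A1\<close>
    (\<forall>x y z. ad (ad x y) z = ad x (ad y z)) \<and> (\<forall>x y. ad x y = ad y x) \<and>
    \<comment> \<open>A2\<close>
    (\<forall>x. \<exists>!e. ad x e = x \<and> (\<forall>f. ad x f = x \<longrightarrow> ad e f = e)) \<and>
    \<comment> \<open>A3\<close>
    (\<forall>x. \<exists>!s. ad x s = sol_e ad x \<and> sol_e ad s = sol_e ad x) \<and>
    \<comment> \<open>A4\<close>
    (\<forall>x y. sol_e ad (ad x y) = sol_e ad x \<or> sol_e ad (ad x y) = sol_e ad y) \<and>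
    \<comment> \<open>M1\<close>
    (\<forall>x y z. mu (mu x y) z = mu x (mu y z)) \<and> (\<forall>x y. mu x y = mu y x) \<and>
    \<comment> \<open>M2\<close>
    (\<forall>x. x \<noteq> sol_e ad x \<longrightarrow> (\<exists>!u. mu x u = x \<and> (\<forall>v. mu x v = x \<longrightarrow> mu u v = u))) \<and>
    \<comment> \<open>M3\<close>
    (\<forall>x. x \<noteq> sol_e ad x \<longrightarrow> (\<exists>!d. mu x d = sol_u mu x \<and> sol_u mu d = sol_u mu x)) \<and>
    \<comment> \<open>M4\<close>
    (\<forall>x y. x \<noteq> sol_e ad x \<longrightarrow> y \<noteq> sol_e ad y \<longrightarrow>
       sol_u mu (mu x y) = sol_u mu x \<or> sol_u mu (mu x y) = sol_u mu y) \<and>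
    \<comment> \<open>O1\<close>
    (\<forall>x. le x x) \<and> (\<forall>x y. le x y \<longrightarrow> le y x \<longrightarrow> x = y) \<and>
    (\<forall>x y z. le x y \<longrightarrow> le y z \<longrightarrow> le x z) \<and> (\<forall>x y. le x y \<or> le y x) \<and>
    \<comment> \<open>O2\<close>
    (\<forall>x y z. le x y \<longrightarrow> le (ad x z) (ad y z)) \<and>
    \<comment> \<open>O3\<close>
    (\<forall>x y. ad y (sol_e ad x) = sol_e ad x \<longrightarrow>
       le y (sol_e ad x) \<and> le (sol_neg ad y) (sol_e ad x)) \<and>
    \<comment> \<open>O4\<close>
    (\<forall>x y z. (le (sol_e ad x) x \<and> sol_e ad x \<noteq> x \<and> le y z) \<longrightarrow> le (mu x y) (mu x z)) \<and>
    \<comment> \<open>O5\<close>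
    (\<forall>x y z. le (sol_e ad y) y \<and> le y z \<longrightarrow> le (mu (sol_e ad x) y) (mu (sol_e ad x) z)) \<and>
    \<comment> \<open>AM1\<close>
    (\<forall>x y. \<exists>z. mu (sol_e ad x) y = sol_e ad z) \<and>
    \<comment> \<open>AM2\<close>
    (\<forall>x y. sol_e ad (mu x y) = ad (mu (sol_e ad x) y) (mu (sol_e ad y) x)) \<and>
    \<comment> \<open>AM3\<close>
    (\<forall>x. x \<noteq> sol_e ad x \<longrightarrow> sol_e ad (sol_u mu x) = mu (sol_e ad x) (sol_inv mu x)) \<and>
    \<comment> \<open>AM4\<close>
    (\<forall>x y z. ad (mu x y) (mu x z) =
       ad (ad (mu x (ad y z)) (mu (sol_e ad x) y)) (mu (sol_e ad x) z)) \<and>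
    \<comment> \<open>AM5\<close>
    (\<forall>x y. sol_neg ad (mu x y) = mu (sol_neg ad x) y) \<and>
    \<comment> \<open>E1\<close>
    (\<exists>!m. \<forall>x. ad m x = x) \<and>
    \<comment> \<open>E2\<close>
    (\<exists>!u. \<forall>x. mu u x = x) \<and>
    \<comment> \<open>E3 and E4 (E4 refers to the M of E3)\<close>
    (\<exists>M. (\<forall>x. ad (sol_e ad x) M = M) \<and>
       (\<exists>x. sol_e ad x \<noteq> sol_zero ad \<and> sol_e ad x \<noteq> M)) \<and>
    \<comment> \<open>E5\<close>
    (\<forall>x. \<exists>a. x = ad a (sol_e ad x) \<and> sol_e ad a = sol_zero ad) \<and>
    \<comment> \<open>E6\<close>
    (\<forall>x y. x = sol_e ad x \<longrightarrow> y = sol_e ad y \<longrightarrow> le x y \<longrightarrow> x \<noteq> y \<longrightarrow>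
       (\<exists>z. z \<noteq> sol_e ad z \<and> le x z \<and> x \<noteq> z \<and> le z y \<and> z \<noteq> y))"

end

theory Submission
  imports Defs
begin

text \<open>Write \<open>n = e(x)\<close>, so \<open>x = a + n\<close> with \<open>a\<close> precise. If \<open>|a| \<le> n\<close>, then \<open>a\<close> is
absorbed by the magnitude \<open>n\<close> and \<open>x = n\<close> would be a magnitude; hence \<open>n < |a|\<close>.
Multiplying by \<open>n\<close>, the distributivity axiom (AM4) and the monotonicity of multiplication by
magnitudes (O5) give \<open>n(a + n) = na\<close>, i.e. \<open>nx = na\<close> (for negative \<open>a\<close> pass to \<open>-a\<close>).
By (AM2) and (AM3) \<open>n u(x) = n\<close>, which lets \<open>nx = na\<close> be cancelled to \<open>nx\<^sup>-\<^sup>1 = na\<^sup>-\<^sup>1\<close>;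
finally (AM3) says \<open>nx\<^sup>-\<^sup>1 = e(u(x))\<close>.\<close>

locale solid_struct =
  fixes ad mu :: "'a \<Rightarrow> 'a \<Rightarrow> 'a" and le :: "'a \<Rightarrow> 'a \<Rightarrow> bool"
  assumes solid: "solid ad mu le"
begin

abbreviation mag where "mag \<equiv> sol_e ad"
abbreviation neg where "neg \<equiv> sol_neg ad"
abbreviation Z where "Z \<equiv> sol_zero ad"
abbreviation unit_of where "unit_of \<equiv> sol_u mu"
abbreviation recip where "recip \<equiv> sol_inv mu"
abbreviation absv where "absv \<equiv> sol_abs ad le"

lemma add_assoc [rule_format]: "\<forall>x y z. ad (ad x y) z = ad x (ad y z)"
  using solid unfolding solid_def by (elim conjE) assumption

lemma add_commute [rule_format]: "\<forall>x y. ad x y = ad y x"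
  using solid unfolding solid_def by (elim conjE) assumption

lemma mag_ex1 [rule_format]: "\<forall>x. \<exists>!e. ad x e = x \<and> (\<forall>f. ad x f = x \<longrightarrow> ad e f = e)"
  using solid unfolding solid_def by (elim conjE) assumption

lemma neg_ex1 [rule_format]: "\<forall>x. \<exists>!s. ad x s = mag x \<and> mag s = mag x"
  using solid unfolding solid_def by (elim conjE) assumption

lemma mag_add [rule_format]: "\<forall>x y. mag (ad x y) = mag x \<or> mag (ad x y) = mag y"
  using solid unfolding solid_def by (elim conjE) assumption

lemma mult_assoc [rule_format]: "\<forall>x y z. mu (mu x y) z = mu x (mu y z)"
  using solid unfolding solid_def by (elim conjE) assumption

lemma mult_commute [rule_format]: "\<forall>x y. mu x y = mu y x"
  using solid unfolding solid_def by (elim conjE) assumption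

lemma unit_ex1 [rule_format]:
  "\<forall>x. x \<noteq> mag x \<longrightarrow> (\<exists>!u. mu x u = x \<and> (\<forall>v. mu x v = x \<longrightarrow> mu u v = u))"
  using solid unfolding solid_def by (elim conjE) assumption

lemma recip_ex1 [rule_format]:
  "\<forall>x. x \<noteq> mag x \<longrightarrow> (\<exists>!d. mu x d = unit_of x \<and> unit_of d = unit_of x)"
  using solid unfolding solid_def by (elim conjE) assumption

lemma le_refl [rule_format]: "\<forall>x. le x x"
  using solid unfolding solid_def by (elim conjE) assumption

lemma le_antisym [rule_format]: "\<forall>x y. le x y \<longrightarrow> le y x \<longrightarrow> x = y"
  using solid unfolding solid_def by (elim conjE) assumption

lemma le_trans [rule_format]: "\<forall>x y z. le x y \<longrightarrow> le y z \<longrightarrow> le x z"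
  using solid unfolding solid_def by (elim conjE) assumption

lemma le_total [rule_format]: "\<forall>x y. le x y \<or> le y x"
  using solid unfolding solid_def by (elim conjE) assumption

lemma add_right_mono [rule_format]: "\<forall>x y z. le x y \<longrightarrow> le (ad x z) (ad y z)"
  using solid unfolding solid_def by (elim conjE) assumption

lemma absorbed_le_mag [rule_format]:
  "\<forall>x y. ad y (mag x) = mag x \<longrightarrow> le y (mag x) \<and> le (neg y) (mag x)"
  using solid unfolding solid_def by (elim conjE) assumption

lemma mag_mult_left_mono [rule_format]:
  "\<forall>x y z. le (mag y) y \<and> le y z \<longrightarrow> le (mu (mag x) y) (mu (mag x) z)"
  using solid unfolding solid_def by (elim conjE) assumption

lemma mag_mult_is_mag [rule_format]: "\<forall>x y. \<exists>z. mu (mag x) y = mag z"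
  using solid unfolding solid_def by (elim conjE) assumption

lemma mag_mult [rule_format]: "\<forall>x y. mag (mu x y) = ad (mu (mag x) y) (mu (mag y) x)"
  using solid unfolding solid_def by (elim conjE) assumption

lemma mag_unit [rule_format]: "\<forall>x. x \<noteq> mag x \<longrightarrow> mag (unit_of x) = mu (mag x) (recip x)"
  using solid unfolding solid_def by (elim conjE) assumption

lemma mult_add_distrib [rule_format]:
  "\<forall>x y z. ad (mu x y) (mu x z) = ad (ad (mu x (ad y z)) (mu (mag x) y)) (mu (mag x) z)"
  using solid unfolding solid_def by (elim conjE) assumption

lemma neg_mult [rule_format]: "\<forall>x y. neg (mu x y) = mu (neg x) y"
  using solid unfolding solid_def by (elim conjE) assumption

lemma zero_ex1: "\<exists>!m. \<forall>x. ad m x = x"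
  using solid unfolding solid_def by (elim conjE) assumption

lemma add_mag: "ad x (mag x) = x"
  and mag_least: "ad x f = x \<Longrightarrow> ad (mag x) f = mag x"
  using theI'[OF mag_ex1[of x]] unfolding sol_e_def by blast+

lemma mag_eqI: "ad x e = x \<Longrightarrow> (\<And>f. ad x f = x \<Longrightarrow> ad e f = e) \<Longrightarrow> mag x = e"
  unfolding sol_e_def by (rule the1_equality[OF mag_ex1]) auto

lemma add_neg: "ad x (neg x) = mag x"
  and mag_neg: "mag (neg x) = mag x"
  using theI'[OF neg_ex1[of x]] unfolding sol_neg_def by blast+

lemma neg_eqI: "ad x s = mag x \<Longrightarrow> mag s = mag x \<Longrightarrow> neg x = s"
  unfolding sol_neg_def by (rule the1_equality[OF neg_ex1]) auto

lemma mult_unit: "x \<noteq> mag x \<Longrightarrow> mu x (unit_of x) = x"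
  using theI'[OF unit_ex1] unfolding sol_u_def by blast

lemma mult_recip: "x \<noteq> mag x \<Longrightarrow> mu x (recip x) = unit_of x"
  using theI'[OF recip_ex1] unfolding sol_inv_def by blast

lemma zero_add: "ad Z y = y"
  using theI'[OF zero_ex1] unfolding sol_zero_def by blast

lemma mag_mag: "mag (mag x) = mag x"
  by (rule mag_eqI) (use add_mag mag_least in metis)+

lemma mag_add_self: "mag m = m \<Longrightarrow> ad m m = m"
  using add_mag[of m] by simp

lemma neg_mag_eq: "mag m = m \<Longrightarrow> neg m = m"
  by (rule neg_eqI) (simp_all add: mag_add_self)

lemma zero_le_mag: "le Z (mag x)"
  using absorbed_le_mag[THEN conjunct1] by (simp add: zero_add)

lemma mag_mult_mag: "mag m = m \<Longrightarrow> mag (mu m y) = mu m y"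
  using mag_mult_is_mag[of m y] mag_mag by metis

lemma add_mag_absorb:
  assumes "le Z b" and "le b m" and "mag m = m"
  shows "ad b m = m"
proof -
  have "le m (ad b m)" using add_right_mono[OF \<open>le Z b\<close>, of m] by (simp add: zero_add)
  moreover have "le (ad b m) m"
    using add_right_mono[OF \<open>le b m\<close>, of m] mag_add_self[OF \<open>mag m = m\<close>] by simp
  ultimately show ?thesis by (rule le_antisym[rotated])
qed

lemma mag_precise_add_mag:
  assumes p: "mag p = Z" and m: "mag m = m"
  shows "mag (ad p m) = m"
proof (rule ccontr)
  assume ne: "mag (ad p m) \<noteq> m"
  then have "mag (ad p m) = Z" using mag_add[of p m] p m by metis
  moreover have "ad (ad p m) m = ad p m" using mag_add_self[OF m] by (simp add: add_assoc)
  then have "ad (mag (ad p m)) m = mag (ad p m)" by (rule mag_least)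
  ultimately show False using ne by (simp add: zero_add)
qed

lemma neg_precise_add_mag:
  assumes p: "mag p = Z" and m: "mag m = m"
  shows "neg (ad p m) = ad (neg p) m"
proof (rule neg_eqI)
  have "ad (ad p m) (ad (neg p) m) = ad (ad p (neg p)) (ad m m)"
    by (metis add_assoc add_commute)
  then show "ad (ad p m) (ad (neg p) m) = mag (ad p m)"
    using add_neg[of p] p mag_add_self[OF m] mag_precise_add_mag[OF p m] by (simp add: zero_add)
  show "mag (ad (neg p) m) = mag (ad p m)"
    using mag_neg[of p] p m by (simp add: mag_precise_add_mag)
qed

lemma mag_le_neg_if_le_mag: "le a (mag a) \<Longrightarrow> le (mag a) (neg a)"
  using add_right_mono[of a "mag a" "neg a"] add_neg[of a] mag_neg[of a] add_commute add_mag
  by metis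

lemma abs_le_mag_absorb:
  assumes a: "mag a = Z" and m: "mag m = m" and le_m: "le (absv a) m"
  shows "ad a m = m"
proof (cases "le (mag a) a")
  case True
  then show ?thesis using le_m a add_mag_absorb[OF _ _ m] unfolding sol_abs_def by simp
next
  case False
  then have "le (mag a) (neg a)" using le_total mag_le_neg_if_le_mag by blast
  moreover have "le (neg a) m" using le_m False unfolding sol_abs_def by simp
  ultimately have "ad (neg a) m = m" using a add_mag_absorb[OF _ _ m] by simp
  then have "ad a m = ad (ad a (neg a)) m" by (simp add: add_assoc)
  then show ?thesis using add_neg[of a] a by (simp add: zero_add)
qed

lemma mag_less_abs:
  assumes "mag a = Z" and "mag m = m" and "ad a m \<noteq> m"
  shows "le m (absv a) \<and> m \<noteq> absv a"
  using abs_le_mag_absorb[OF assms(1,2)] assms(3) le_total le_refl by metis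

lemma mult_left_commute: "mu x (mu y z) = mu y (mu x z)"
  by (metis mult_assoc mult_commute)

lemma mult_neg_right: "mu x (neg y) = neg (mu x y)"
  by (metis neg_mult mult_commute)

lemma mag_mult_add_mag_eq_pos:
  assumes p: "mag p = Z" and m: "mag m = m" and mp: "le m p"
  shows "mu m (ad p m) = mu m p"
proof -
  note mag_m_mult = mag_mult_mag[OF m]
  have zero_le_m_mult: "le Z (mu m y)" for y using zero_le_mag[of "mu m y"] mag_m_mult by simp
  have "le Z m" using zero_le_mag[of m] m by simp
  then have "le Z p" using mp le_trans by blast
  have "le p (ad p m)" using add_right_mono[OF \<open>le Z m\<close>, of p] zero_add add_commute by metis
  have "le (mu m m) (mu m p)" using mag_mult_left_mono[where x = m and y = m and z = p] m mp le_refl by simp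
  then have "ad (mu m m) (mu m p) = mu m p" using add_mag_absorb zero_le_m_mult mag_m_mult by blast
  moreover have "ad (mu m p) (mu m m) = ad (ad (mu m (ad p m)) (mu m p)) (mu m m)"
    using mult_add_distrib[of m p m] m by simp
  ultimately have "mu m p = ad (mu m (ad p m)) (mu m p)" by (metis add_assoc add_commute)
  moreover have "le (mu m p) (mu m (ad p m))"
    using mag_mult_left_mono[where x = m and y = p and z = "ad p m"] p m \<open>le Z p\<close> \<open>le p (ad p m)\<close> by simp
  then have "ad (mu m p) (mu m (ad p m)) = mu m (ad p m)"
    using add_mag_absorb zero_le_m_mult mag_m_mult by blast
  ultimately show ?thesis by (metis add_commute)
qed

lemma mag_mult_add_mag_eq:
  assumes a: "mag a = Z" and m: "mag m = m" and le_abs: "le m (absv a)"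
  shows "mu m (ad a m) = mu m a"
proof (cases "le (mag a) a")
  case True
  then show ?thesis using mag_mult_add_mag_eq_pos[OF a m] le_abs unfolding sol_abs_def by simp
next
  case False
  have "le m (neg a)" using le_abs False unfolding sol_abs_def by simp
  then have "mu m (ad (neg a) m) = mu m (neg a)"
    using mag_mult_add_mag_eq_pos[OF _ m] mag_neg[of a] a by simp
  then have "neg (mu m (ad a m)) = neg (mu m a)"
    by (simp add: neg_precise_add_mag[OF a m, symmetric] mult_neg_right)
  then show ?thesis using neg_mag_eq[OF mag_mult_mag[OF m]] by simp
qed

lemma mag_mult_unit:
  assumes x: "x \<noteq> mag x"
  shows "mu (mag x) (unit_of x) = mag x"
proof -
  have "mu (mag (unit_of x)) x = mu (mag x) (mu x (recip x))"
    using mag_unit[OF x] by (simp add: mult_assoc mult_commute mult_left_commute)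
  then have "mag x = ad (mu (mag x) (unit_of x)) (mu (mag x) (unit_of x))"
    using mag_mult[of x "unit_of x"] mult_unit[OF x] mult_recip[OF x] by simp
  then show ?thesis using mag_add_self[OF mag_mult_mag[OF mag_mag]] by simp
qed

lemma mult_unit_transfer:
  assumes x: "x \<noteq> mag x" and y: "y \<noteq> mag y"
    and eq: "mu m x = mu m y" and unit_x: "mu m (unit_of x) = m"
  shows "mu m (unit_of y) = m"
proof -
  have "mu m (unit_of y) = mu (mu (mu m x) (recip x)) (unit_of y)"
    using unit_x mult_recip[OF x] by (simp add: mult_assoc)
  also have "\<dots> = mu (mu (mu m y) (unit_of y)) (recip x)"
    unfolding eq by (simp add: mult_assoc mult_commute mult_left_commute)
  also have "\<dots> = mu (mu m x) (recip x)"
    using mult_unit[OF y] eq by (simp add: mult_assoc)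
  also have "\<dots> = m"
    using mult_recip[OF x] unit_x by (simp add: mult_assoc)
  finally show ?thesis .
qed

lemma mult_recip_cong:
  assumes x: "x \<noteq> mag x" and y: "y \<noteq> mag y"
    and eq: "mu m x = mu m y" and unit_x: "mu m (unit_of x) = m"
  shows "mu m (recip x) = mu m (recip y)"
proof -
  have "mu m (recip x) = mu (mu (mu m y) (recip y)) (recip x)"
    using mult_unit_transfer[OF assms] mult_recip[OF y] by (simp add: mult_assoc)
  also have "\<dots> = mu (mu (mu m x) (recip x)) (recip y)"
    unfolding eq by (simp add: mult_assoc mult_commute mult_left_commute)
  also have "\<dots> = mu m (recip y)"
    using mult_recip[OF x] unit_x by (simp add: mult_assoc)
  finally show ?thesis .
qed

end

theorem mainTheorem10:
  fixes ad mu :: "'a \<Rightarrow> 'a \<Rightarrow> 'a" and le :: "'a \<Rightarrow> 'a \<Rightarrow> bool" and x a :: 'a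
  assumes "solid ad mu le"
    and "x \<noteq> sol_e ad x"
    and "x = ad a (sol_e ad x)"
    and "sol_e ad a = sol_zero ad"
  shows "le (sol_e ad x) (sol_abs ad le a) \<and> sol_e ad x \<noteq> sol_abs ad le a \<and>
         mu (sol_e ad x) (sol_inv mu a) = mu (sol_e ad x) (sol_inv mu x) \<and>
         mu (sol_e ad x) (sol_inv mu x) = sol_e ad (sol_u mu x)"
proof -
  interpret solid_struct ad mu le using assms(1) by (rule solid_struct.intro)
  let ?n = "mag x"
  have n: "mag ?n = ?n" by (rule mag_mag)
  have "ad a ?n \<noteq> ?n" using assms(2,3) by simp
  with assms(4) n have less: "le ?n (absv a) \<and> ?n \<noteq> absv a" by (rule mag_less_abs)
  have a: "a \<noteq> mag a" using assms(2-4) zero_add by metis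
  have "mu ?n x = mu ?n a"
    using mag_mult_add_mag_eq[OF assms(4) n] less assms(3) by simp
  then have "mu ?n (recip x) = mu ?n (recip a)"
    using mult_recip_cong[OF assms(2) a] mag_mult_unit[OF assms(2)] by blast
  then show ?thesis using less mag_unit[OF assms(2)] by simp
qed

end
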